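(* Let $G=G_1\times G_2$ be a direct product of finite groups, let $A$ be a finite group on which $G_1$ acts from the right by automorphisms, and let $I=\mathrm{Ind}_{G_1}^G(A)$, where $G_1$ is identified with $G_1\times\{1\}\leq G$. Assume $|G_2|\geq|A|$. Then there exists $\zeta\in I$ such that for every $g_1\in G_1$, the normal subgroup $N$ of $A\wr_{G_1}G$ generated by $\tau=(\zeta,(g_1,1))$ satisfies $\pi(N\cap I)=A$.
   Context: For finite groups $G_1\leq G$ and a finite group $A$ with a right action of $G_1$, $\mathrm{Ind}_{G_1}^G(A)=\{f:G\to A \mid f(\sigma\tau)=f(\sigma)^\tau\ \forall\sigma\in G,\ \forall\tau\in G_1\}$, a group under pointwise multiplication. $G$ acts on it from the right by $f^\sigma(\tau)=f(\sigma\tau)$. The twisted wreath product is the semidirect product $A\wr_{G_1}G=\mathrm{Ind}_{G_1}^G(A)\rtimes G$. The map $\pi:\mathrm{Ind}_{G_1}^G(A)\to A$ is $\pi(f)=f(1)$. *)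

theory Defs
  imports "HOL-Algebra.Group" "HOL-Algebra.Generated_Groups"
begin

text \<open>A right action of the group G1 on the group A by automorphisms:
  act t a stands for a raised to t (right exponential notation).\<close>
definition right_aut_action ::
  "('g, 'c) monoid_scheme \<Rightarrow> ('a, 'd) monoid_scheme \<Rightarrow> ('g \<Rightarrow> 'a \<Rightarrow> 'a) \<Rightarrow> bool" where
  "right_aut_action G1 A act \<longleftrightarrow>
     (\<forall>t\<in>carrier G1. act t \<in> iso A A) \<and>
     (\<forall>a\<in>carrier A. act \<one>\<^bsub>G1\<^esub> a = a) \<and>
     (\<forall>s\<in>carrier G1. \<forall>t\<in>carrier G1. \<forall>a\<in>carrier A.
        act (s \<otimes>\<^bsub>G1\<^esub> t) a = act t (act s a))"

definition Ind ::
  "('g, 'c) monoid_scheme \<Rightarrow> ('h, 'e) monoid_scheme \<Rightarrow> ('a, 'd) monoid_scheme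
    \<Rightarrow> ('g \<Rightarrow> 'a \<Rightarrow> 'a) \<Rightarrow> ('g \<times> 'h \<Rightarrow> 'a) set" where
  "Ind G1 G2 A act =
     {f. f \<in> carrier (G1 \<times>\<times> G2) \<rightarrow>\<^sub>E carrier A \<and>
         (\<forall>s\<in>carrier (G1 \<times>\<times> G2). \<forall>t\<in>carrier G1.
            f (s \<otimes>\<^bsub>G1 \<times>\<times> G2\<^esub> (t, \<one>\<^bsub>G2\<^esub>)) = act t (f s))}"

definition ind_act ::
  "('g, 'c) monoid_scheme \<Rightarrow> ('h, 'e) monoid_scheme
    \<Rightarrow> ('g \<times> 'h \<Rightarrow> 'a) \<Rightarrow> 'g \<times> 'h \<Rightarrow> ('g \<times> 'h \<Rightarrow> 'a)" where
  "ind_act G1 G2 f s = (\<lambda>x\<in>carrier (G1 \<times>\<times> G2). f (s \<otimes>\<^bsub>G1 \<times>\<times> G2\<^esub> x))"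

text \<open>Twisted wreath product Ind \<rtimes> G, with s^-1 f s = f^s, i.e.
  (f,s)(f',s') = (f * f'^(s^-1), s s').\<close>
definition twisted_wreath ::
  "('g, 'c) monoid_scheme \<Rightarrow> ('h, 'e) monoid_scheme \<Rightarrow> ('a, 'd) monoid_scheme
    \<Rightarrow> ('g \<Rightarrow> 'a \<Rightarrow> 'a) \<Rightarrow> (('g \<times> 'h \<Rightarrow> 'a) \<times> ('g \<times> 'h)) monoid" where
  "twisted_wreath G1 G2 A act =
     \<lparr> carrier = Ind G1 G2 A act \<times> carrier (G1 \<times>\<times> G2),
       mult = (\<lambda>(f, s) (f', s').
          ((\<lambda>x\<in>carrier (G1 \<times>\<times> G2).
              f x \<otimes>\<^bsub>A\<^esub> ind_act G1 G2 f' (inv\<^bsub>G1 \<times>\<times> G2\<^esub> s) x),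
           s \<otimes>\<^bsub>G1 \<times>\<times> G2\<^esub> s')),
       one = ((\<lambda>x\<in>carrier (G1 \<times>\<times> G2). \<one>\<^bsub>A\<^esub>), \<one>\<^bsub>G1 \<times>\<times> G2\<^esub>) \<rparr>"

definition normal_closure :: "('w, 'c) monoid_scheme \<Rightarrow> 'w set \<Rightarrow> 'w set" where
  "normal_closure W S =
     generate W (\<Union>g\<in>carrier W. (\<lambda>s. g \<otimes>\<^bsub>W\<^esub> s \<otimes>\<^bsub>W\<^esub> inv\<^bsub>W\<^esub> g) ` S)"

definition ind_pi :: "('g, 'c) monoid_scheme \<Rightarrow> ('h, 'e) monoid_scheme
    \<Rightarrow> ('g \<times> 'h \<Rightarrow> 'a) \<Rightarrow> 'a" where
  "ind_pi G1 G2 f = f \<one>\<^bsub>G1 \<times>\<times> G2\<^esub>"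

end

theory Submission
  imports Defs
begin

(* G2 commutes with (g1,1), so conjugating tau by (1,(1,h^-1)) only translates zeta:
   it gives (zeta^{(1,h)}, (g1,1)).  Dividing by tau leaves the element
   (x \<mapsto> zeta((1,h) x) zeta(x)^-1, 1) of N \<inter> I, whose image under pi is
   zeta(1,h) zeta(1)^-1.  Choosing a surjection phi : G2 \<rightarrow> A (possible since |G2| >= |A|)
   and zeta(g1,h) = phi(h)^g1, these values exhaust A. *)

lemma conjugate_quotient_in_normal_closure:
  assumes "c \<in> carrier W" and "d \<in> carrier W"
  shows "(c \<otimes>\<^bsub>W\<^esub> x \<otimes>\<^bsub>W\<^esub> inv\<^bsub>W\<^esub> c) \<otimes>\<^bsub>W\<^esub> inv\<^bsub>W\<^esub> (d \<otimes>\<^bsub>W\<^esub> x \<otimes>\<^bsub>W\<^esub> inv\<^bsub>W\<^esub> d)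
         \<in> normal_closure W {x}"
  unfolding normal_closure_def
  using assms by (blast intro: generate.eng generate.incl generate.inv)

lemma surjection_from_larger_finite_set:
  assumes "finite X" and "finite Y" and "card X \<le> card Y" and "X \<noteq> {}"
  shows "\<exists>\<phi>. \<phi> ` Y = X"
  using card_le_inj[OF assms(1-3)] inj_on_iff_surj[OF assms(4)] by blast

locale twisted_wreath_setup = G1: group G1 + G2: group G2 + A: group A
  for G1 :: "('g, 'c) monoid_scheme" and G2 :: "('h, 'e) monoid_scheme"
    and A :: "('a, 'd) monoid_scheme" and act :: "'g \<Rightarrow> 'a \<Rightarrow> 'a" +
  assumes action: "right_aut_action G1 A act"
begin

abbreviation G where "G \<equiv> G1 \<times>\<times> G2"
abbreviation I where "I \<equiv> Ind G1 G2 A act"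
abbreviation W where "W \<equiv> twisted_wreath G1 G2 A act"

sublocale G: group G
  by (simp add: DirProd_group G1.group_axioms G2.group_axioms)

text \<open>Closure of G, stated for the product form of its carrier that the simplifier produces.\<close>
lemma G_mult_closed [simp]:
  "x \<in> carrier G1 \<times> carrier G2 \<Longrightarrow> y \<in> carrier G1 \<times> carrier G2 \<Longrightarrow>
    x \<otimes>\<^bsub>G\<^esub> y \<in> carrier G1 \<times> carrier G2"
  using G.m_closed by simp

lemma G_inv_closed [simp]:
  "x \<in> carrier G1 \<times> carrier G2 \<Longrightarrow> inv\<^bsub>G\<^esub> x \<in> carrier G1 \<times> carrier G2"
  using G.inv_closed by simp

lemma act_hom: "t \<in> carrier G1 \<Longrightarrow> group_hom A A (act t)"
  using action unfolding right_aut_action_def iso_def group_hom_def group_hom_axioms_def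
  by (auto simp: A.group_axioms)

lemma act_closed: "t \<in> carrier G1 \<Longrightarrow> a \<in> carrier A \<Longrightarrow> act t a \<in> carrier A"
  by (rule group_hom.hom_closed[OF act_hom])

lemma act_mult: "t \<in> carrier G1 \<Longrightarrow> a \<in> carrier A \<Longrightarrow> b \<in> carrier A \<Longrightarrow>
    act t (a \<otimes>\<^bsub>A\<^esub> b) = act t a \<otimes>\<^bsub>A\<^esub> act t b"
  by (rule group_hom.hom_mult[OF act_hom])

lemma act_inv: "t \<in> carrier G1 \<Longrightarrow> a \<in> carrier A \<Longrightarrow> act t (inv\<^bsub>A\<^esub> a) = inv\<^bsub>A\<^esub> (act t a)"
  by (rule group_hom.hom_inv[OF act_hom])

lemma act_one: "t \<in> carrier G1 \<Longrightarrow> act t \<one>\<^bsub>A\<^esub> = \<one>\<^bsub>A\<^esub>"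
  by (rule group_hom.hom_one[OF act_hom])

lemma act_unit: "a \<in> carrier A \<Longrightarrow> act \<one>\<^bsub>G1\<^esub> a = a"
  using action unfolding right_aut_action_def by blast

lemma act_compose: "s \<in> carrier G1 \<Longrightarrow> t \<in> carrier G1 \<Longrightarrow> a \<in> carrier A \<Longrightarrow>
    act (s \<otimes>\<^bsub>G1\<^esub> t) a = act t (act s a)"
  using action unfolding right_aut_action_def by blast

lemma IndI:
  assumes "\<And>x. x \<in> carrier G \<Longrightarrow> f x \<in> carrier A" and "f \<in> extensional (carrier G)"
    and "\<And>s t. s \<in> carrier G \<Longrightarrow> t \<in> carrier G1 \<Longrightarrow>
          f (s \<otimes>\<^bsub>G\<^esub> (t, \<one>\<^bsub>G2\<^esub>)) = act t (f s)"
  shows "f \<in> I"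
  using assms unfolding Ind_def PiE_def by blast

lemma Ind_closed: "f \<in> I \<Longrightarrow> x \<in> carrier G \<Longrightarrow> f x \<in> carrier A"
  unfolding Ind_def by blast

lemma Ind_extensional: "f \<in> I \<Longrightarrow> f \<in> extensional (carrier G)"
  unfolding Ind_def PiE_def by blast

lemma Ind_equivariant: "f \<in> I \<Longrightarrow> s \<in> carrier G \<Longrightarrow> t \<in> carrier G1 \<Longrightarrow>
    f (s \<otimes>\<^bsub>G\<^esub> (t, \<one>\<^bsub>G2\<^esub>)) = act t (f s)"
  unfolding Ind_def by blast

lemma ind_act_apply: "x \<in> carrier G \<Longrightarrow> ind_act G1 G2 f t x = f (t \<otimes>\<^bsub>G\<^esub> x)"
  by (simp add: ind_act_def)

text \<open>G acts on Ind: left translation of the argument commutes with right G1-equivariance.\<close>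
lemma ind_act_Ind:
  assumes f: "f \<in> I" and t: "t \<in> carrier G"
  shows "ind_act G1 G2 f t \<in> I"
proof (rule IndI)
  fix s u assume s: "s \<in> carrier G" and u: "u \<in> carrier G1"
  have su: "s \<otimes>\<^bsub>G\<^esub> (u, \<one>\<^bsub>G2\<^esub>) \<in> carrier G"
    using s u by simp
  have "t \<otimes>\<^bsub>G\<^esub> (s \<otimes>\<^bsub>G\<^esub> (u, \<one>\<^bsub>G2\<^esub>)) = (t \<otimes>\<^bsub>G\<^esub> s) \<otimes>\<^bsub>G\<^esub> (u, \<one>\<^bsub>G2\<^esub>)"
    using s t u by (simp add: G.m_assoc)
  then show "ind_act G1 G2 f t (s \<otimes>\<^bsub>G\<^esub> (u, \<one>\<^bsub>G2\<^esub>)) = act u (ind_act G1 G2 f t s)"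
    using s t u su Ind_equivariant[OF f, of "t \<otimes>\<^bsub>G\<^esub> s" u]
    by (simp only: ind_act_apply G.m_closed)
qed (use f t Ind_closed in \<open>auto simp: ind_act_def\<close>)

lemma ind_act_one: "f \<in> I \<Longrightarrow> ind_act G1 G2 f \<one>\<^bsub>G\<^esub> = f"
  by (rule extensionalityI[OF _ Ind_extensional]) (auto simp: ind_act_def)

lemma Ind_pointwise_mult:
  assumes f: "f \<in> I" and f': "f' \<in> I"
  shows "(\<lambda>x\<in>carrier G. f x \<otimes>\<^bsub>A\<^esub> f' x) \<in> I"
  by (rule IndI) (use f f' Ind_closed Ind_equivariant in \<open>auto simp: act_mult\<close>)

lemma Ind_pointwise_inv:
  assumes f: "f \<in> I"
  shows "(\<lambda>x\<in>carrier G. inv\<^bsub>A\<^esub> f x) \<in> I"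
  by (rule IndI) (use f Ind_closed Ind_equivariant in \<open>auto simp: act_inv\<close>)

lemma Ind_unit: "(\<lambda>x\<in>carrier G. \<one>\<^bsub>A\<^esub>) \<in> I"
  by (rule IndI) (auto simp: act_one)

lemma carrier_W: "carrier W = I \<times> carrier G"
  by (simp add: twisted_wreath_def)

lemma one_W: "\<one>\<^bsub>W\<^esub> = ((\<lambda>x\<in>carrier G. \<one>\<^bsub>A\<^esub>), \<one>\<^bsub>G\<^esub>)"
  by (simp add: twisted_wreath_def)

lemma mult_W: "(f, s) \<otimes>\<^bsub>W\<^esub> (f', s') =
    ((\<lambda>x\<in>carrier G. f x \<otimes>\<^bsub>A\<^esub> f' (inv\<^bsub>G\<^esub> s \<otimes>\<^bsub>G\<^esub> x)), s \<otimes>\<^bsub>G\<^esub> s')"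
  by (simp add: twisted_wreath_def ind_act_def cong: restrict_cong)

lemma G_cancel:
  assumes "s \<in> carrier G" and "x \<in> carrier G"
  shows "s \<otimes>\<^bsub>G\<^esub> (inv\<^bsub>G\<^esub> s \<otimes>\<^bsub>G\<^esub> x) = x" and "inv\<^bsub>G\<^esub> s \<otimes>\<^bsub>G\<^esub> (s \<otimes>\<^bsub>G\<^esub> x) = x"
  using assms by (simp_all add: G.m_assoc[symmetric])

lemma W_right_inverse_unique:
  assumes f: "f \<in> I" and s: "s \<in> carrier G" and g: "g \<in> I" and t: "t \<in> carrier G"
    and right_inv: "(f, s) \<otimes>\<^bsub>W\<^esub> (g, t) = \<one>\<^bsub>W\<^esub>"
  shows "(g, t) = ((\<lambda>x\<in>carrier G. inv\<^bsub>A\<^esub> f (s \<otimes>\<^bsub>G\<^esub> x)), inv\<^bsub>G\<^esub> s)"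
proof -
  have pointwise: "f x \<otimes>\<^bsub>A\<^esub> g (inv\<^bsub>G\<^esub> s \<otimes>\<^bsub>G\<^esub> x) = \<one>\<^bsub>A\<^esub>"
    and st: "s \<otimes>\<^bsub>G\<^esub> t = \<one>\<^bsub>G\<^esub>" if "x \<in> carrier G" for x
    using right_inv that unfolding mult_W one_W by (auto dest: fun_cong[of _ _ x])
  have "t = inv\<^bsub>G\<^esub> s"
    using st G.inv_solve_left[OF t s G.one_closed] s t by auto
  moreover have "g = (\<lambda>x\<in>carrier G. inv\<^bsub>A\<^esub> f (s \<otimes>\<^bsub>G\<^esub> x))"
  proof (rule extensionalityI[OF Ind_extensional[OF g] restrict_extensional])
    fix x assume x: "x \<in> carrier G"
    have "f (s \<otimes>\<^bsub>G\<^esub> x) \<otimes>\<^bsub>A\<^esub> g x = \<one>\<^bsub>A\<^esub>"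
      using pointwise[of "s \<otimes>\<^bsub>G\<^esub> x"] G_cancel(2)[OF s x] s x by simp
    moreover have "f (s \<otimes>\<^bsub>G\<^esub> x) \<in> carrier A"
      using Ind_closed[OF f] s x by simp
    ultimately show "g x = (\<lambda>x\<in>carrier G. inv\<^bsub>A\<^esub> f (s \<otimes>\<^bsub>G\<^esub> x)) x"
      using A.inv_solve_left[OF Ind_closed[OF g x] _ A.one_closed] x by simp
  qed
  ultimately show ?thesis by simp
qed

text \<open>The inverse of (f, s) in W is (x \<mapsto> f(s x)^-1, s^-1): it is a two-sided inverse,
  and the only one by the uniqueness of right inverses.\<close>
lemma inv_W:
  assumes f: "f \<in> I" and s: "s \<in> carrier G"
  shows "inv\<^bsub>W\<^esub> (f, s) = ((\<lambda>x\<in>carrier G. inv\<^bsub>A\<^esub> f (s \<otimes>\<^bsub>G\<^esub> x)), inv\<^bsub>G\<^esub> s)"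
proof -
  define f' where "f' = (\<lambda>x\<in>carrier G. inv\<^bsub>A\<^esub> f (s \<otimes>\<^bsub>G\<^esub> x))"
  have "(f', inv\<^bsub>G\<^esub> s) \<in> carrier W"
    using Ind_pointwise_inv[OF ind_act_Ind[OF f s]] s
    by (simp add: carrier_W f'_def ind_act_def cong: restrict_cong)
  moreover have "(f, s) \<otimes>\<^bsub>W\<^esub> (f', inv\<^bsub>G\<^esub> s) = \<one>\<^bsub>W\<^esub>"
    using s f Ind_closed G_cancel(1)[OF s]
    by (simp add: mult_W one_W f'_def del: carrier_DirProd cong: restrict_cong)
  moreover have "(f', inv\<^bsub>G\<^esub> s) \<otimes>\<^bsub>W\<^esub> (f, s) = \<one>\<^bsub>W\<^esub>"
    using s f Ind_closed
    by (simp add: mult_W one_W f'_def del: carrier_DirProd cong: restrict_cong)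
  moreover have "y = (f', inv\<^bsub>G\<^esub> s)" if "y \<in> carrier W" and "(f, s) \<otimes>\<^bsub>W\<^esub> y = \<one>\<^bsub>W\<^esub>" for y
    using that W_right_inverse_unique[OF f s] unfolding f'_def by (auto simp: carrier_W)
  ultimately show ?thesis
    unfolding m_inv_def[of W] f'_def[symmetric] by (intro the_equality) blast+
qed

lemma conjugate_by_G:
  assumes f: "f \<in> I" and s: "s \<in> carrier G" and t: "t \<in> carrier G"
  shows "((\<lambda>x\<in>carrier G. \<one>\<^bsub>A\<^esub>), t) \<otimes>\<^bsub>W\<^esub> (f, s) \<otimes>\<^bsub>W\<^esub> inv\<^bsub>W\<^esub> ((\<lambda>x\<in>carrier G. \<one>\<^bsub>A\<^esub>), t)
       = (ind_act G1 G2 f (inv\<^bsub>G\<^esub> t), t \<otimes>\<^bsub>G\<^esub> s \<otimes>\<^bsub>G\<^esub> inv\<^bsub>G\<^esub> t)"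
proof -
  have "inv\<^bsub>W\<^esub> ((\<lambda>x\<in>carrier G. \<one>\<^bsub>A\<^esub>), t) = ((\<lambda>x\<in>carrier G. \<one>\<^bsub>A\<^esub>), inv\<^bsub>G\<^esub> t)"
    using inv_W[OF Ind_unit t] t by (simp del: carrier_DirProd cong: restrict_cong)
  then show ?thesis
    using f s t Ind_closed
    by (simp add: mult_W ind_act_def del: carrier_DirProd cong: restrict_cong)
qed

lemma mult_inv_same_G_part:
  assumes f: "f \<in> I" and s: "s \<in> carrier G"
  shows "(f', s) \<otimes>\<^bsub>W\<^esub> inv\<^bsub>W\<^esub> (f, s) = ((\<lambda>x\<in>carrier G. f' x \<otimes>\<^bsub>A\<^esub> inv\<^bsub>A\<^esub> f x), \<one>\<^bsub>G\<^esub>)"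
  using G_cancel(1)[OF s] s
  by (simp add: inv_W[OF f s] mult_W del: carrier_DirProd cong: restrict_cong)

definition translation_quotient :: "('g \<times> 'h \<Rightarrow> 'a) \<Rightarrow> 'h \<Rightarrow> 'g \<times> 'h \<Rightarrow> 'a" where
  "translation_quotient \<zeta> h =
     (\<lambda>x\<in>carrier G. \<zeta> ((\<one>\<^bsub>G1\<^esub>, h) \<otimes>\<^bsub>G\<^esub> x) \<otimes>\<^bsub>A\<^esub> inv\<^bsub>A\<^esub> \<zeta> x)"

lemma translation_quotient_Ind:
  assumes "\<zeta> \<in> I" and "h \<in> carrier G2"
  shows "translation_quotient \<zeta> h \<in> I"
  using Ind_pointwise_mult[OF ind_act_Ind Ind_pointwise_inv, of \<zeta> "(\<one>\<^bsub>G1\<^esub>, h)" \<zeta>] assms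
  by (simp add: translation_quotient_def ind_act_def cong: restrict_cong)

lemma ind_pi_translation_quotient:
  "h \<in> carrier G2 \<Longrightarrow>
    ind_pi G1 G2 (translation_quotient \<zeta> h) = \<zeta> (\<one>\<^bsub>G1\<^esub>, h) \<otimes>\<^bsub>A\<^esub> inv\<^bsub>A\<^esub> \<zeta> \<one>\<^bsub>G\<^esub>"
  by (simp add: ind_pi_def translation_quotient_def)

text \<open>Key step: since G2 centralises (g1, 1), conjugating tau = (zeta, (g1, 1)) by
  (1, (1, h^-1)) translates zeta by h and keeps (g1, 1); dividing by tau leaves the
  translation quotient in the base group.\<close>
lemma translation_quotient_in_normal_closure:
  assumes \<zeta>: "\<zeta> \<in> I" and g1: "g1 \<in> carrier G1" and h: "h \<in> carrier G2"
  shows "(translation_quotient \<zeta> h, \<one>\<^bsub>G\<^esub>) \<in> normal_closure W {(\<zeta>, (g1, \<one>\<^bsub>G2\<^esub>))}"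
proof -
  let ?e = "\<lambda>x\<in>carrier G. \<one>\<^bsub>A\<^esub>"
  let ?\<tau> = "(\<zeta>, (g1, \<one>\<^bsub>G2\<^esub>))"
  have shifted: "(?e, (\<one>\<^bsub>G1\<^esub>, inv\<^bsub>G2\<^esub> h)) \<otimes>\<^bsub>W\<^esub> ?\<tau> \<otimes>\<^bsub>W\<^esub> inv\<^bsub>W\<^esub> (?e, (\<one>\<^bsub>G1\<^esub>, inv\<^bsub>G2\<^esub> h))
      = (ind_act G1 G2 \<zeta> (\<one>\<^bsub>G1\<^esub>, h), (g1, \<one>\<^bsub>G2\<^esub>))"
    using conjugate_by_G[OF \<zeta>, of "(g1, \<one>\<^bsub>G2\<^esub>)" "(\<one>\<^bsub>G1\<^esub>, inv\<^bsub>G2\<^esub> h)"] g1 h by simp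
  have unshifted: "(?e, \<one>\<^bsub>G\<^esub>) \<otimes>\<^bsub>W\<^esub> ?\<tau> \<otimes>\<^bsub>W\<^esub> inv\<^bsub>W\<^esub> (?e, \<one>\<^bsub>G\<^esub>) = ?\<tau>"
    using conjugate_by_G[OF \<zeta>, of "(g1, \<one>\<^bsub>G2\<^esub>)" "\<one>\<^bsub>G\<^esub>"] ind_act_one[OF \<zeta>] g1
    by simp
  have "(ind_act G1 G2 \<zeta> (\<one>\<^bsub>G1\<^esub>, h), (g1, \<one>\<^bsub>G2\<^esub>)) \<otimes>\<^bsub>W\<^esub> inv\<^bsub>W\<^esub> ?\<tau>
      = (translation_quotient \<zeta> h, \<one>\<^bsub>G\<^esub>)"
    using mult_inv_same_G_part[OF \<zeta>, of "(g1, \<one>\<^bsub>G2\<^esub>)"] g1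
    by (simp add: translation_quotient_def ind_act_apply cong: restrict_cong)
  moreover have "(?e, g) \<in> carrier W" if "g \<in> carrier G" for g
    using Ind_unit that by (simp add: carrier_W)
  ultimately show ?thesis
    using conjugate_quotient_in_normal_closure[of "(?e, (\<one>\<^bsub>G1\<^esub>, inv\<^bsub>G2\<^esub> h))" W "(?e, \<one>\<^bsub>G\<^esub>)" ?\<tau>]
      shifted unshifted h by simp
qed

definition induced :: "('h \<Rightarrow> 'a) \<Rightarrow> 'g \<times> 'h \<Rightarrow> 'a" where
  "induced \<phi> = (\<lambda>x\<in>carrier G. act (fst x) (\<phi> (snd x)))"

lemma induced_Ind:
  assumes "\<phi> ` carrier G2 \<subseteq> carrier A"
  shows "induced \<phi> \<in> I"
proof (rule IndI)
  fix s t assume "s \<in> carrier G" and "t \<in> carrier G1"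
  then show "induced \<phi> (s \<otimes>\<^bsub>G\<^esub> (t, \<one>\<^bsub>G2\<^esub>)) = act t (induced \<phi> s)"
    using assms by (cases s) (auto simp: induced_def act_compose)
qed (use assms in \<open>auto simp: induced_def act_closed\<close>)

lemma induced_at_G2:
  "h \<in> carrier G2 \<Longrightarrow> \<phi> h \<in> carrier A \<Longrightarrow> induced \<phi> (\<one>\<^bsub>G1\<^esub>, h) = \<phi> h"
  by (simp add: induced_def act_unit)

theorem induced_normal_closure_projects_onto:
  assumes \<phi>: "\<phi> ` carrier G2 = carrier A" and g1: "g1 \<in> carrier G1"
  shows "ind_pi G1 G2 ` {f \<in> I. (f, \<one>\<^bsub>G\<^esub>) \<in> normal_closure W {(induced \<phi>, (g1, \<one>\<^bsub>G2\<^esub>))}}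
           = carrier A" (is "ind_pi G1 G2 ` ?N = _")
proof
  show "ind_pi G1 G2 ` ?N \<subseteq> carrier A"
    using Ind_closed by (auto simp: ind_pi_def)
next
  show "carrier A \<subseteq> ind_pi G1 G2 ` ?N"
  proof
    fix a assume a: "a \<in> carrier A"
    have \<phi>1: "\<phi> \<one>\<^bsub>G2\<^esub> \<in> carrier A"
      using \<phi> by blast
    then obtain h where h: "h \<in> carrier G2" and \<phi>h: "\<phi> h = a \<otimes>\<^bsub>A\<^esub> \<phi> \<one>\<^bsub>G2\<^esub>"
      using \<phi> a by (metis A.m_closed imageE)
    have \<zeta>: "induced \<phi> \<in> I"
      using \<phi> by (simp add: induced_Ind)
    have "translation_quotient (induced \<phi>) h \<in> ?N"
      using translation_quotient_Ind[OF \<zeta> h] translation_quotient_in_normal_closure[OF \<zeta> g1 h]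
      by blast
    moreover have "ind_pi G1 G2 (translation_quotient (induced \<phi>) h) = a"
      using \<phi>1 \<phi>h a h induced_at_G2[of "\<one>\<^bsub>G2\<^esub>" \<phi>] induced_at_G2[of h \<phi>]
      by (simp add: ind_pi_translation_quotient A.m_assoc)
    ultimately show "a \<in> ind_pi G1 G2 ` ?N"
      by blast
  qed
qed

end

theorem lemma4p1:
  fixes G1 :: "('g, 'c) monoid_scheme" and G2 :: "('h, 'e) monoid_scheme"
    and A :: "('a, 'd) monoid_scheme" and act :: "'g \<Rightarrow> 'a \<Rightarrow> 'a"
  assumes "group G1" and "group G2" and "group A"
    and "finite (carrier G1)" and "finite (carrier G2)" and "finite (carrier A)"
    and "right_aut_action G1 A act"
    and "card (carrier G2) \<ge> card (carrier A)"
  shows "\<exists>\<zeta>\<in>Ind G1 G2 A act. \<forall>g1\<in>carrier G1.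
     (let W = twisted_wreath G1 G2 A act;
          N = normal_closure W {(\<zeta>, (g1, \<one>\<^bsub>G2\<^esub>))}
      in ind_pi G1 G2 ` {f \<in> Ind G1 G2 A act. (f, \<one>\<^bsub>G1 \<times>\<times> G2\<^esub>) \<in> N}
         = carrier A)"
proof -
  interpret twisted_wreath_setup G1 G2 A act
    using assms by (simp add: twisted_wreath_setup_def twisted_wreath_setup_axioms_def)
  obtain \<phi> where \<phi>: "\<phi> ` carrier G2 = carrier A"
    using surjection_from_larger_finite_set[OF assms(6,5,8)] A.one_closed by blast
  show ?thesis
    using induced_Ind[of \<phi>] induced_normal_closure_projects_onto[OF \<phi>] \<phi>
    by (auto simp: Let_def)
qed

end
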